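(* For any $\rho>0$ and $n\in\mathbb{N}$, the following randomized test $\texttt{DPBern}$ satisfies $\rho$-zCDP (with respect to datasets of $n$ rows $(x_i,y_i)\in\mathbb{R}^2$, $n$ public). Input: data $(x_1,y_1),\dots,(x_n,y_n)$, $\rho>0$, and a significance level $\alpha\in(0,1)$. Choose a uniformly random permutation $\tau$ of $[n]$, let $n_s=\lfloor n/2\rfloor$ and $s=0$. For $i=1,\dots,n_s$: if $x_{\tau(n_s+i)}\ne x_{\tau(i)}$, add $\mathbb{1}\{(y_{\tau(n_s+i)}-y_{\tau(i)})/(x_{\tau(n_s+i)}-x_{\tau(i)})>0\}$ to $s$; otherwise add an independent $\mathrm{Bern}(1/2)$ sample to $s$. Then replace $s$ by $s+\mathcal{N}(0,\frac1{2\rho})$. Let $N_{\alpha/2},N_{1-\alpha/2}$ be the $\alpha/2$ and $1-\alpha/2$ quantiles of $\mathcal{N}(n_s/2,\ n_s/4+\frac1{2\rho})$. Output "reject the null" if $s\notin(N_{\alpha/2},N_{1-\alpha/2})$ and "fail to reject the null" otherwise.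
   Context: Two datasets of $n$ rows are neighboring if they differ in exactly one row. A randomized mechanism $\mathcal{M}$ satisfies $\rho$-zCDP if for all neighboring datasets $\mathbf{x},\mathbf{x}'$ and all $\alpha'\in(1,\infty)$, $D_{\alpha'}(\mathcal{M}(\mathbf{x})\|\mathcal{M}(\mathbf{x}'))\le\rho\alpha'$, where $D_{\alpha'}$ is the Rényi divergence of order $\alpha'$. *)

theory Defs
  imports "HOL-Probability.Probability"
begin

definition renyi_div :: "real \<Rightarrow> 'b::finite pmf \<Rightarrow> 'b pmf \<Rightarrow> ereal" where
  "renyi_div a P Q =
     (if \<exists>w. pmf Q w = 0 \<and> pmf P w > 0 then \<infinity>
      else ereal (ln (\<Sum>w\<in>UNIV. pmf P w powr a * pmf Q w powr (1 - a)) / (a - 1)))"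

definition neighboring :: "nat \<Rightarrow> 'r list \<Rightarrow> 'r list \<Rightarrow> bool" where
  "neighboring n xs ys \<longleftrightarrow> length xs = n \<and> length ys = n \<and>
     card {i. i < n \<and> xs ! i \<noteq> ys ! i} = 1"

definition zCDP :: "real \<Rightarrow> nat \<Rightarrow> ('r list \<Rightarrow> 'b::finite pmf) \<Rightarrow> bool" where
  "zCDP \<rho> n M \<longleftrightarrow> (\<forall>xs ys. neighboring n xs ys \<longrightarrow>
     (\<forall>a::real. a > 1 \<longrightarrow> renyi_div a (M xs) (M ys) \<le> ereal (\<rho> * a)))"

(* Gaussian N(mu, sigma^2) as a measure, sigma = standard deviation *)
definition gauss :: "real \<Rightarrow> real \<Rightarrow> real measure" where
  "gauss \<mu> \<sigma> = density lborel (normal_density \<mu> \<sigma>)"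

definition gauss_quantile :: "real \<Rightarrow> real \<Rightarrow> real \<Rightarrow> real" where
  "gauss_quantile \<mu> \<sigma> q = Inf {t. q \<le> measure (gauss \<mu> \<sigma>) {..t}}"

(* Distribution of the un-noised statistic s (0-based indices; pair i with n_s + i) *)
definition dpbern_stat :: "(real \<times> real) list \<Rightarrow> real pmf" where
  "dpbern_stat d =
     (let n = length d; ns = n div 2 in
      bind_pmf (pmf_of_set {\<tau>. \<tau> permutes {..<n}}) (\<lambda>\<tau>.
      bind_pmf (Pi_pmf {..<ns} False (\<lambda>_. bernoulli_pmf (1/2))) (\<lambda>c.
      return_pmf (\<Sum>i<ns.
         (let (x1, y1) = d ! (\<tau> i); (x2, y2) = d ! (\<tau> (ns + i)) in
          if x2 \<noteq> x1 then (if (y2 - y1) / (x2 - x1) > 0 then 1 else 0)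
          else (if c i then 1 else 0))))))"

(* DPBern output: True = "reject the null", False = "fail to reject".
   s + N(0, 1/(2 rho)) is rejected iff it lies outside (N_{a/2}, N_{1-a/2}), so the output
   given s is Bernoulli with the Gaussian probability of that event. *)
definition dpbern :: "real \<Rightarrow> real \<Rightarrow> (real \<times> real) list \<Rightarrow> bool pmf" where
  "dpbern \<rho> \<alpha> d =
     (let ns = length d div 2;
          \<sigma>q = sqrt (real ns / 4 + 1 / (2 * \<rho>));
          lo = gauss_quantile (real ns / 2) \<sigma>q (\<alpha> / 2);
          hi = gauss_quantile (real ns / 2) \<sigma>q (1 - \<alpha> / 2)
      in bind_pmf (dpbern_stat d) (\<lambda>s.
           bernoulli_pmf (measure (gauss s (sqrt (1 / (2 * \<rho>)))) (- {lo<..<hi}))))"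

end

(* Conditionally on the permutation and the coins, the statistic s is a sum of 0/1 terms, one
   per pair of rows; a changed row lies in at most one pair, so s has sensitivity 1. The output
   is a test on s + N(0, 1/(2 rho)). For Gaussians of equal variance and a Borel set A, Jensen's
   inequality for the jointly convex function (p, q) |-> p^a q^(1-a), applied to the densities
   on A, gives N_s(A)^a N_s'(A)^(1-a) <= exp(a(a-1)(s-s')^2/(2 sigma^2)) N_m(A) with
   m = a s + (1-a) s'; summing over A and its complement bounds the Renyi divergence of the test
   by a (s-s')^2/(2 sigma^2) <= rho a. The same inequality, applied over the permutation and the
   coins, shows that mixing does not increase the divergence. *)

theory Submission
  imports Defs
begin

lemma powr_perspective_tangent_eq:
  fixes a p q :: real
  assumes "p > 0" "q > 0"
  shows "a * (p / q) powr (a - 1) * p + (1 - a) * (p / q) powr a * q = p powr a * q powr (1 - a)"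
proof -
  have "(p / q) powr (a - 1) * p = p powr a * q powr (1 - a)"
       "(p / q) powr a * q = p powr a * q powr (1 - a)"
    using assms by (simp_all add: powr_divide powr_diff)
  then show ?thesis by (simp add: algebra_simps)
qed

text \<open>The hypothesis \<open>q = 0 \<longrightarrow> p = 0\<close> is needed because \<open>0 powr (1 - a) = 0\<close>
  in Isabelle, whereas the function should be \<open>+\<infinity>\<close> at \<open>q = 0 < p\<close>.\<close>

lemma powr_perspective_tangent:
  fixes a p q r :: real
  assumes "a > 1" "r > 0" "p \<ge> 0" "q \<ge> 0" "q = 0 \<longrightarrow> p = 0"
  shows "a * r powr (a - 1) * p + (1 - a) * r powr a * q \<le> p powr a * q powr (1 - a)"
proof (cases "p = 0")
  case True
  then show ?thesis using assms by (simp add: mult_nonpos_nonneg)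
next
  case False
  then have pq: "p > 0" "q > 0" using assms by auto
  have "r powr a + a * r powr (a - 1) * (p / q - r) \<le> (p / q) powr a"
  proof -
    have "(p / q) powr a - r powr a \<ge> a * r powr (a - 1) * (p / q - r)"
    proof (rule convex_on_imp_above_tangent[where A="{0<..}"])
      show "convex_on {0<..} (\<lambda>x. x powr a)" using assms by (intro powr_convex) simp
      show "((\<lambda>x. x powr a) has_real_derivative a * r powr (a - 1)) (at r within {0<..})"
        using assms by (intro has_field_derivative_at_within[OF has_real_derivative_powr])
    qed (use assms pq in \<open>auto simp: interior_open\<close>)
    then show ?thesis by simp
  qed
  then have "(r powr a + a * r powr (a - 1) * (p / q - r)) * q \<le> (p / q) powr a * q"
    using pq by (intro mult_right_mono) auto
  moreover have "r powr a = r powr (a - 1) * r"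
    using assms by (simp add: powr_diff)
  then have "(r powr a + a * r powr (a - 1) * (p / q - r)) * q
      = a * r powr (a - 1) * p + (1 - a) * r powr a * q"
    using pq by (simp add: field_simps)
  moreover have "(p / q) powr a * q = p powr a * q powr (1 - a)"
    using pq by (simp add: powr_divide powr_diff)
  ultimately show ?thesis by simp
qed

text \<open>\<open>p\<^sup>a q\<^sup>1\<^sup>-\<^sup>a\<close> is the supremum over \<open>r > 0\<close> of the linear functions of
  \<open>powr_perspective_tangent\<close>, attained at \<open>r = p / q\<close>; integrate the one chosen for the integrals.\<close>

lemma integral_powr_perspective_le:
  fixes f g :: "'x \<Rightarrow> real" and a :: real
  assumes "a > 1" and "integrable M f" "integrable M g"
    and "integrable M (\<lambda>x. f x powr a * g x powr (1 - a))"
    and "AE x in M. 0 \<le> f x" "AE x in M. 0 \<le> g x" "AE x in M. g x = 0 \<longrightarrow> f x = 0"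
  shows "(\<integral>x. f x \<partial>M) powr a * (\<integral>x. g x \<partial>M) powr (1 - a) \<le> (\<integral>x. f x powr a * g x powr (1 - a) \<partial>M)"
proof (cases "(\<integral>x. f x \<partial>M) = 0 \<or> (\<integral>x. g x \<partial>M) = 0")
  case True
  then show ?thesis by (auto intro: integral_nonneg_AE)
next
  case False
  then have pos: "(\<integral>x. f x \<partial>M) > 0" "(\<integral>x. g x \<partial>M) > 0"
    using integral_nonneg_AE[OF assms(5)] integral_nonneg_AE[OF assms(6)] by linarith+
  define r where "r = (\<integral>x. f x \<partial>M) / (\<integral>x. g x \<partial>M)"
  have "r > 0" using pos by (simp add: r_def)
  have "(\<integral>x. f x \<partial>M) powr a * (\<integral>x. g x \<partial>M) powr (1 - a)
      = (\<integral>x. a * r powr (a - 1) * f x + (1 - a) * r powr a * g x \<partial>M)"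
    using powr_perspective_tangent_eq[OF pos] assms by (simp add: r_def)
  also have "\<dots> \<le> (\<integral>x. f x powr a * g x powr (1 - a) \<partial>M)"
  proof (rule integral_mono_AE)
    show "AE x in M. a * r powr (a - 1) * f x + (1 - a) * r powr a * g x \<le> f x powr a * g x powr (1 - a)"
      using assms(5-7) by eventually_elim (rule powr_perspective_tangent[OF assms(1) \<open>r > 0\<close>])
  qed (use assms in simp_all)
  finally show ?thesis .
qed

lemma renyi_div_le_ereal_iff:
  fixes P Q :: "'b::finite pmf"
  assumes "a > 1"
  shows "renyi_div a P Q \<le> ereal D \<longleftrightarrow> set_pmf P \<subseteq> set_pmf Q \<and>
    (\<Sum>w\<in>UNIV. pmf P w powr a * pmf Q w powr (1 - a)) \<le> exp ((a - 1) * D)"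
proof (cases "set_pmf P \<subseteq> set_pmf Q")
  case False
  then have "\<exists>w. pmf Q w = 0 \<and> pmf P w > 0"
    by (auto simp: set_pmf_iff order_less_le)
  then show ?thesis using False by (simp add: renyi_div_def)
next
  case True
  then have abs_cont: "\<not> (\<exists>w. pmf Q w = 0 \<and> pmf P w > 0)"
    by (auto simp: set_pmf_iff subset_iff)
  define S where "S = (\<Sum>w\<in>UNIV. pmf P w powr a * pmf Q w powr (1 - a))"
  obtain w where "w \<in> set_pmf P" using set_pmf_not_empty[of P] by blast
  then have "pmf P w powr a * pmf Q w powr (1 - a) > 0"
    using True by (auto simp: set_pmf_iff)
  then have "S > 0" unfolding S_def by (intro sum_pos2) auto
  have "renyi_div a P Q = ereal (ln S / (a - 1))"
    unfolding renyi_div_def S_def if_not_P[OF abs_cont] ..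
  then have "renyi_div a P Q \<le> ereal D \<longleftrightarrow> ln S \<le> ln (exp ((a - 1) * D))"
    using assms by (simp add: pos_divide_le_eq mult.commute)
  also have "\<dots> \<longleftrightarrow> S \<le> exp ((a - 1) * D)"
    using \<open>S > 0\<close> by (rule ln_le_cancel_iff) simp
  finally show ?thesis using True by (simp add: S_def)
qed

lemma renyi_div_bind_pmf_le:
  fixes \<mu> :: "'k pmf" and P Q :: "'k \<Rightarrow> 'b::finite pmf"
  assumes "a > 1" and le: "\<And>k. k \<in> set_pmf \<mu> \<Longrightarrow> renyi_div a (P k) (Q k) \<le> ereal D"
  shows "renyi_div a (bind_pmf \<mu> P) (bind_pmf \<mu> Q) \<le> ereal D"
proof -
  define E where "E = exp ((a - 1) * D)"
  let ?h = "\<lambda>k w. pmf (P k) w powr a * pmf (Q k) w powr (1 - a)"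
  have sub: "set_pmf (P k) \<subseteq> set_pmf (Q k)" and sum: "(\<Sum>w\<in>UNIV. ?h k w) \<le> E"
    if "k \<in> set_pmf \<mu>" for k
    using le[OF that] by (simp_all add: renyi_div_le_ereal_iff[OF assms(1)] E_def)
  have abs_cont: "pmf (Q k) w = 0 \<longrightarrow> pmf (P k) w = 0" if "k \<in> set_pmf \<mu>" for k w
    using sub[OF that] by (auto simp: set_pmf_iff)
  have h_le: "?h k w \<le> E" if "k \<in> set_pmf \<mu>" for k w
    using sum[OF that] member_le_sum[of w UNIV "?h k"] by simp
  have int: "integrable (measure_pmf \<mu>) (\<lambda>k. pmf (R k) w)" for R w
    by (rule measure_pmf.integrable_const_bound[where B=1]) (auto simp: pmf_le_1)
  have int_h: "integrable (measure_pmf \<mu>) (\<lambda>k. ?h k w)" for w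
    by (rule measure_pmf.integrable_const_bound[where B=E]) (auto simp: AE_measure_pmf_iff h_le)
  have "(\<Sum>w\<in>UNIV. pmf (bind_pmf \<mu> P) w powr a * pmf (bind_pmf \<mu> Q) w powr (1 - a))
      \<le> (\<Sum>w\<in>UNIV. \<integral>k. ?h k w \<partial>measure_pmf \<mu>)"
    unfolding pmf_bind using assms(1)
    by (intro sum_mono integral_powr_perspective_le)
       (auto simp: AE_measure_pmf_iff int int_h abs_cont)
  also have "\<dots> = (\<integral>k. (\<Sum>w\<in>UNIV. ?h k w) \<partial>measure_pmf \<mu>)"
    using int_h by (simp add: Bochner_Integration.integral_sum)
  also have "\<dots> \<le> E"
    using int_h sum by (intro measure_pmf.integral_le_const) (auto simp: AE_measure_pmf_iff)
  finally show ?thesis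
    using sub by (auto simp: renyi_div_le_ereal_iff[OF assms(1)] E_def set_bind_pmf)
qed

lemma prob_space_gauss: "\<sigma> > 0 \<Longrightarrow> prob_space (gauss \<mu> \<sigma>)"
  unfolding gauss_def by (rule prob_space_normal_density)

lemma sets_gauss [simp]: "sets (gauss \<mu> \<sigma>) = sets borel"
  unfolding gauss_def by simp

lemma space_gauss [simp]: "space (gauss \<mu> \<sigma>) = UNIV"
  unfolding gauss_def by simp

lemma measure_gauss_Compl:
  assumes "\<sigma> > 0" "B \<in> sets borel"
  shows "measure (gauss \<mu> \<sigma>) (- B) = 1 - measure (gauss \<mu> \<sigma>) B"
proof -
  interpret prob_space "gauss \<mu> \<sigma>" using assms(1) by (rule prob_space_gauss)
  show ?thesis using prob_compl[of B] assms(2) by (simp add: Compl_eq_Diff_UNIV)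
qed

lemma measure_gauss_eq_integral:
  assumes "A \<in> sets borel"
  shows "measure (gauss \<mu> \<sigma>) A = (\<integral>x. normal_density \<mu> \<sigma> x * indicator A x \<partial>lborel)"
proof -
  have "measure (gauss \<mu> \<sigma>) A = (\<integral>x. indicator A x \<partial>gauss \<mu> \<sigma>)"
    by simp
  also have "\<dots> = (\<integral>x. normal_density \<mu> \<sigma> x *\<^sub>R indicator A x \<partial>lborel)"
    unfolding gauss_def using assms by (intro integral_density) auto
  finally show ?thesis by simp
qed

lemma measure_gauss_eq_0_iff:
  assumes "\<sigma> > 0" "A \<in> sets borel"
  shows "measure (gauss \<mu> \<sigma>) A = 0 \<longleftrightarrow> A \<in> null_sets lborel"
proof -
  interpret prob_space "gauss \<mu> \<sigma>" using assms(1) by (rule prob_space_gauss)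
  have "measure (gauss \<mu> \<sigma>) A = 0 \<longleftrightarrow> A \<in> null_sets (gauss \<mu> \<sigma>)"
    using assms(2) by (simp add: emeasure_eq_measure null_sets_def)
  also have "\<dots> \<longleftrightarrow> (AE x in lborel. x \<in> A \<longrightarrow> normal_density \<mu> \<sigma> x = 0)"
    unfolding gauss_def using assms(2) by (subst null_sets_density_iff) auto
  also have "\<dots> \<longleftrightarrow> A \<in> null_sets lborel"
    using assms by (simp add: AE_iff_null_sets normal_density_pos less_imp_neq[symmetric])
  finally show ?thesis .
qed

lemma normal_density_powr_mult:
  fixes s s' a \<sigma> x :: real
  assumes "\<sigma> > 0"
  shows "normal_density s \<sigma> x powr a * normal_density s' \<sigma> x powr (1 - a) =
    exp (a * (a - 1) * (s - s')\<^sup>2 / (2 * \<sigma>\<^sup>2)) * normal_density (a * s + (1 - a) * s') \<sigma> x"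
proof -
  define K where "K = 1 / sqrt (2 * pi * \<sigma>\<^sup>2)"
  define D where "D = 2 * \<sigma>\<^sup>2"
  define e where "e = (\<lambda>m. -(x - m)\<^sup>2 / D)"
  have "K > 0" "D > 0" using assms by (simp_all add: K_def D_def)
  have nd: "normal_density m \<sigma> x = K * exp (e m)" for m
    by (simp only: normal_density_def K_def D_def e_def)
  have "(K * exp (e s)) powr a * (K * exp (e s')) powr (1 - a)
      = (K powr a * K powr (1 - a)) * (exp (a * e s) * exp ((1 - a) * e s'))"
    using \<open>K > 0\<close> by (simp add: powr_mult exp_powr_real mult_ac)
  also have "\<dots> = K * exp (a * e s + (1 - a) * e s')"
    using \<open>K > 0\<close> by (simp add: powr_add[symmetric] exp_add)
  also have "a * e s + (1 - a) * e s' = a * (a - 1) * (s - s')\<^sup>2 / D + e (a * s + (1 - a) * s')"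
    using \<open>D > 0\<close> by (simp add: e_def field_simps power2_eq_square)
  finally show ?thesis
    unfolding nd D_def by (simp add: exp_add)
qed

lemma measure_gauss_powr_le:
  fixes a s s' \<sigma> :: real
  assumes "\<sigma> > 0" "a > 1" "A \<in> sets borel"
  shows "measure (gauss s \<sigma>) A powr a * measure (gauss s' \<sigma>) A powr (1 - a)
    \<le> exp (a * (a - 1) * (s - s')\<^sup>2 / (2 * \<sigma>\<^sup>2)) * measure (gauss (a * s + (1 - a) * s') \<sigma>) A"
proof -
  let ?c = "exp (a * (a - 1) * (s - s')\<^sup>2 / (2 * \<sigma>\<^sup>2))" and ?m = "a * s + (1 - a) * s'"
  let ?f = "\<lambda>\<mu> x. normal_density \<mu> \<sigma> x * indicator A x"
  have int: "integrable lborel (?f \<mu>)" for \<mu>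
    using assms by (intro integrable_real_mult_indicator) auto
  have prod: "?f s x powr a * ?f s' x powr (1 - a) = ?c * ?f ?m x" for x
    using assms by (cases "x \<in> A") (simp_all add: normal_density_powr_mult)
  have "measure (gauss s \<sigma>) A powr a * measure (gauss s' \<sigma>) A powr (1 - a)
      = (\<integral>x. ?f s x \<partial>lborel) powr a * (\<integral>x. ?f s' x \<partial>lborel) powr (1 - a)"
    using assms by (simp add: measure_gauss_eq_integral)
  also have "\<dots> \<le> (\<integral>x. ?f s x powr a * ?f s' x powr (1 - a) \<partial>lborel)"
    using assms int normal_density_pos[OF assms(1)]
    by (intro integral_powr_perspective_le) (auto simp: prod less_imp_neq[symmetric])
  also have "\<dots> = ?c * measure (gauss ?m \<sigma>) A"
    using assms by (simp add: prod measure_gauss_eq_integral)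
  finally show ?thesis .
qed

lemma pmf_bernoulli_gauss:
  assumes "\<sigma> > 0" "B \<in> sets borel"
  shows "pmf (bernoulli_pmf (measure (gauss \<mu> \<sigma>) (- B))) w = measure (gauss \<mu> \<sigma>) (if w then - B else B)"
proof -
  have "measure (gauss \<mu> \<sigma>) B \<le> 1"
    using assms(1) by (intro prob_space.prob_le_1 prob_space_gauss)
  then show ?thesis using measure_gauss_Compl[OF assms] by (cases w) simp_all
qed

lemma renyi_div_bernoulli_gauss_le:
  fixes a s s' \<sigma> :: real
  assumes "\<sigma> > 0" "a > 1" "B \<in> sets borel"
  shows "renyi_div a (bernoulli_pmf (measure (gauss s \<sigma>) (- B))) (bernoulli_pmf (measure (gauss s' \<sigma>) (- B)))
    \<le> ereal (a * (s - s')\<^sup>2 / (2 * \<sigma>\<^sup>2))"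
proof -
  define c where "c = exp (a * (a - 1) * (s - s')\<^sup>2 / (2 * \<sigma>\<^sup>2))"
  define m where "m = a * s + (1 - a) * s'"
  let ?A = "\<lambda>w. if w then - B else B" and ?N = "\<lambda>\<mu>. measure (gauss \<mu> \<sigma>)"
  have A: "?A w \<in> sets borel" for w using assms(3) by simp
  have "(\<Sum>w\<in>UNIV. pmf (bernoulli_pmf (?N s (- B))) w powr a * pmf (bernoulli_pmf (?N s' (- B))) w powr (1 - a))
      = (\<Sum>w\<in>UNIV. ?N s (?A w) powr a * ?N s' (?A w) powr (1 - a))"
    using assms by (simp only: pmf_bernoulli_gauss)
  also have "\<dots> \<le> (\<Sum>w\<in>UNIV. c * ?N m (?A w))"
    unfolding c_def m_def using assms A by (intro sum_mono measure_gauss_powr_le)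
  also have "\<dots> = c"
    using measure_gauss_Compl[OF assms(1,3), of m] by (simp add: UNIV_bool flip: distrib_left)
  also have "c = exp ((a - 1) * (a * (s - s')\<^sup>2 / (2 * \<sigma>\<^sup>2)))"
    unfolding c_def by (simp add: algebra_simps)
  finally show ?thesis
    using assms A
    by (auto simp: renyi_div_le_ereal_iff set_pmf_iff pmf_bernoulli_gauss measure_gauss_eq_0_iff)
qed

lemma renyi_div_bind_bernoulli_gauss_le:
  fixes \<mu> :: "'k pmf" and S S' :: "'k \<Rightarrow> real"
  assumes "\<sigma> > 0" "a > 1" "B \<in> sets borel"
    and sensitivity: "\<And>k. k \<in> set_pmf \<mu> \<Longrightarrow> \<bar>S k - S' k\<bar> \<le> \<Delta>"
  shows "renyi_div a (bind_pmf \<mu> (\<lambda>k. bernoulli_pmf (measure (gauss (S k) \<sigma>) (- B))))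
                     (bind_pmf \<mu> (\<lambda>k. bernoulli_pmf (measure (gauss (S' k) \<sigma>) (- B))))
    \<le> ereal (a * \<Delta>\<^sup>2 / (2 * \<sigma>\<^sup>2))"
proof (rule renyi_div_bind_pmf_le[OF assms(2)])
  fix k assume "k \<in> set_pmf \<mu>"
  then have "(S k - S' k)\<^sup>2 \<le> \<Delta>\<^sup>2"
    using sensitivity by (metis abs_le_square_iff order_trans abs_ge_self)
  then have "a * (S k - S' k)\<^sup>2 / (2 * \<sigma>\<^sup>2) \<le> a * \<Delta>\<^sup>2 / (2 * \<sigma>\<^sup>2)"
    using assms(2) by (intro divide_right_mono mult_left_mono) auto
  then show "renyi_div a (bernoulli_pmf (measure (gauss (S k) \<sigma>) (- B)))
                         (bernoulli_pmf (measure (gauss (S' k) \<sigma>) (- B))) \<le> ereal (a * \<Delta>\<^sup>2 / (2 * \<sigma>\<^sup>2))"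
    using renyi_div_bernoulli_gauss_le[OF assms(1-3), of "S k" "S' k"] by (simp add: order_trans)
qed

definition slope_indicator :: "real \<times> real \<Rightarrow> real \<times> real \<Rightarrow> bool \<Rightarrow> real" where
  "slope_indicator p q coin =
     (let (x1, y1) = p; (x2, y2) = q in
      if x2 \<noteq> x1 then (if (y2 - y1) / (x2 - x1) > 0 then 1 else 0)
      else (if coin then 1 else 0))"

definition dpbern_sum :: "(real \<times> real) list \<Rightarrow> (nat \<Rightarrow> nat) \<times> (nat \<Rightarrow> bool) \<Rightarrow> real" where
  "dpbern_sum d = (\<lambda>(\<tau>, c). \<Sum>i<length d div 2.
     slope_indicator (d ! \<tau> i) (d ! \<tau> (length d div 2 + i)) (c i))"

definition dpbern_coins :: "nat \<Rightarrow> ((nat \<Rightarrow> nat) \<times> (nat \<Rightarrow> bool)) pmf" where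
  "dpbern_coins n = pair_pmf (pmf_of_set {\<tau>. \<tau> permutes {..<n}})
     (Pi_pmf {..<n div 2} False (\<lambda>_. bernoulli_pmf (1/2)))"

lemma dpbern_stat_eq_map_pmf: "dpbern_stat d = map_pmf (dpbern_sum d) (dpbern_coins (length d))"
  unfolding dpbern_stat_def dpbern_coins_def pair_pmf_def map_bind_pmf map_return_pmf Let_def
  by (intro bind_pmf_cong refl) (simp add: dpbern_sum_def slope_indicator_def Let_def)

lemma slope_indicator_01: "slope_indicator p q coin \<in> {0, 1}"
  unfolding slope_indicator_def by (simp add: Let_def split: prod.split)

lemma abs_slope_indicator_diff_le_1:
  "\<bar>slope_indicator p q coin - slope_indicator p' q' coin'\<bar> \<le> 1"
  using slope_indicator_01[of p q coin] slope_indicator_01[of p' q' coin'] by auto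

lemma card_pairs_meeting_le_1:
  fixes \<tau> :: "nat \<Rightarrow> 'a"
  assumes "inj \<tau>"
  shows "card {i. i < m \<and> (\<tau> i = j \<or> \<tau> (m + i) = j)} \<le> 1"
proof -
  have "x = y" if "x < m" "y < m" "\<tau> x = j \<or> \<tau> (m + x) = j" "\<tau> y = j \<or> \<tau> (m + y) = j" for x y
    using assms that by (metis add_diff_cancel_left' injD not_add_less1)
  moreover have "finite {i. i < m \<and> (\<tau> i = j \<or> \<tau> (m + i) = j)}" by simp
  ultimately show ?thesis by (simp add: card_le_Suc0_iff_eq)
qed

lemma dpbern_sum_sensitivity:
  assumes "neighboring n xs ys" "k \<in> set_pmf (dpbern_coins n)"
  shows "\<bar>dpbern_sum xs k - dpbern_sum ys k\<bar> \<le> 1"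
proof -
  obtain \<tau> c where k: "k = (\<tau>, c)" by (cases k)
  have \<tau>: "\<tau> permutes {..<n}"
  proof -
    have "{\<tau>. \<tau> permutes {..<n}} \<noteq> {}" using permutes_id by blast
    moreover have "finite {\<tau>. \<tau> permutes {..<n}}" by (rule finite_permutations) simp
    ultimately show ?thesis using assms(2) by (simp add: k dpbern_coins_def set_pmf_of_set)
  qed
  have len: "length xs = n" "length ys = n" using assms(1) by (simp_all add: neighboring_def)
  obtain j where j: "{i. i < n \<and> xs ! i \<noteq> ys ! i} = {j}"
    using assms(1) by (auto simp: neighboring_def card_1_singleton_iff)
  define ns where "ns = n div 2"
  define f where "f = (\<lambda>d i. slope_indicator (d ! \<tau> i) (d ! \<tau> (ns + i)) (c i))"
  define D where "D = {i. i < ns \<and> (\<tau> i = j \<or> \<tau> (ns + i) = j)}"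
  have row_eq: "xs ! \<tau> i = ys ! \<tau> i" if "i < n" "\<tau> i \<noteq> j" for i
    using j that permutes_in_image[OF \<tau>, of i] by (auto simp: set_eq_iff)
  have "\<bar>dpbern_sum xs k - dpbern_sum ys k\<bar> = \<bar>\<Sum>i<ns. f xs i - f ys i\<bar>"
    by (simp add: dpbern_sum_def k len f_def ns_def sum_subtractf)
  also have "\<dots> \<le> (\<Sum>i<ns. \<bar>f xs i - f ys i\<bar>)"
    by (rule sum_abs)
  also have "\<dots> = (\<Sum>i\<in>D. \<bar>f xs i - f ys i\<bar>)"
  proof (rule sum.mono_neutral_right)
    show "\<forall>i\<in>{..<ns} - D. \<bar>f xs i - f ys i\<bar> = 0"
    proof
      fix i assume "i \<in> {..<ns} - D"
      moreover have "i < n" "ns + i < n" if "i < ns" using that by (simp_all add: ns_def)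
      ultimately show "\<bar>f xs i - f ys i\<bar> = 0" by (simp add: D_def f_def row_eq)
    qed
  qed (auto simp: D_def)
  also have "\<dots> \<le> card D"
    by (intro sum_bounded_above[where K=1, simplified]) (simp add: f_def abs_slope_indicator_diff_le_1)
  also have "\<dots> \<le> 1"
    unfolding D_def using card_pairs_meeting_le_1[OF permutes_inj[OF \<tau>]] by simp
  finally show ?thesis .
qed

definition dpbern_acceptance :: "real \<Rightarrow> real \<Rightarrow> nat \<Rightarrow> real set" where
  "dpbern_acceptance \<rho> \<alpha> n =
     (let ns = n div 2; \<sigma>q = sqrt (real ns / 4 + 1 / (2 * \<rho>))
      in {gauss_quantile (real ns / 2) \<sigma>q (\<alpha> / 2)<..<gauss_quantile (real ns / 2) \<sigma>q (1 - \<alpha> / 2)})"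

lemma dpbern_eq_bind_pmf:
  "dpbern \<rho> \<alpha> d = bind_pmf (dpbern_coins (length d)) (\<lambda>k. bernoulli_pmf
     (measure (gauss (dpbern_sum d k) (sqrt (1 / (2 * \<rho>)))) (- dpbern_acceptance \<rho> \<alpha> (length d))))"
  unfolding dpbern_def dpbern_acceptance_def Let_def dpbern_stat_eq_map_pmf bind_map_pmf ..

theorem lemma4p2:
  fixes \<rho> \<alpha> :: real and n :: nat
  assumes "\<rho> > 0" and "0 < \<alpha>" and "\<alpha> < 1"
  shows "zCDP \<rho> n (dpbern \<rho> \<alpha>)"
  unfolding zCDP_def
proof (intro allI impI)
  fix xs ys :: "(real \<times> real) list" and a :: real
  assume nb: "neighboring n xs ys" and "a > 1"
  then have len: "length xs = n" "length ys = n" by (simp_all add: neighboring_def)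
  define \<sigma> where "\<sigma> = sqrt (1 / (2 * \<rho>))"
  have "\<sigma> > 0" "a * 1\<^sup>2 / (2 * \<sigma>\<^sup>2) = \<rho> * a" using assms(1) by (simp_all add: \<sigma>_def)
  have "dpbern_acceptance \<rho> \<alpha> n \<in> sets borel" by (simp add: dpbern_acceptance_def Let_def)
  with \<open>\<sigma> > 0\<close> \<open>a > 1\<close> have "renyi_div a
      (bind_pmf (dpbern_coins n) (\<lambda>k. bernoulli_pmf (measure (gauss (dpbern_sum xs k) \<sigma>) (- dpbern_acceptance \<rho> \<alpha> n))))
      (bind_pmf (dpbern_coins n) (\<lambda>k. bernoulli_pmf (measure (gauss (dpbern_sum ys k) \<sigma>) (- dpbern_acceptance \<rho> \<alpha> n))))
    \<le> ereal (a * 1\<^sup>2 / (2 * \<sigma>\<^sup>2))"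
    using dpbern_sum_sensitivity[OF nb] by (rule renyi_div_bind_bernoulli_gauss_le)
  then show "renyi_div a (dpbern \<rho> \<alpha> xs) (dpbern \<rho> \<alpha> ys) \<le> ereal (\<rho> * a)"
    unfolding dpbern_eq_bind_pmf len \<sigma>_def[symmetric] \<open>a * 1\<^sup>2 / (2 * \<sigma>\<^sup>2) = \<rho> * a\<close> .
qed

end
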